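(* Let $m \ge 3$ and $n \ge 2$ be integers, and let $k \ge 1$ be the integer with $k^2 \le n < (k+1)^2$, so that $n = k^2 + h$ with $0 \le h \le 2k$. Then $\mathrm{sg_e}(P_n \,\square\, K_m) = mk$ if $h = 0$; $\mathrm{sg_e}(P_n \,\square\, K_m) = mk + (m-1)$ if $1 \le h \le k$; and $\mathrm{sg_e}(P_n \,\square\, K_m) = mk + m$ if $k+1 \le h \le 2k$. In particular, $\mathrm{sg_e}(P_2 \,\square\, K_m) = 2m-1$ for $m\ge 3$.
   Context: All graphs are finite, simple and connected. $P_n$ is the path on $n$ vertices and $K_m$ the complete graph on $m$ vertices. The Cartesian product $G \,\square\, H$ has vertex set $V(G)\times V(H)$, with $(g,h)$ adjacent to $(g',h')$ iff either $g=g'$ and $hh' \in E(H)$, or $h=h'$ and $gg' \in E(G)$. A set $S \subseteq V(G)$ is a strong edge geodetic set of $G$ if one can assign to every unordered pair $\{u,v\}$ of distinct vertices of $S$ either one shortest $u,v$-path $P_{uv}$ in $G$ or no path, in such a way that every edge of $G$ lies on at least one of the assigned paths. The strong edge geodetic number $\mathrm{sg_e}(G)$ is the minimum cardinality of a strong edge geodetic set of $G$. *)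

theory Defs
  imports Main
begin

text \<open>A graph is given by a vertex set V and a symmetric irreflexive adjacency relation E.\<close>

definition walk :: "'a set \<Rightarrow> ('a \<Rightarrow> 'a \<Rightarrow> bool) \<Rightarrow> 'a list \<Rightarrow> bool" where
  "walk V E P \<longleftrightarrow> P \<noteq> [] \<and> set P \<subseteq> V \<and> (\<forall>i. Suc i < length P \<longrightarrow> E (P ! i) (P ! Suc i))"

text \<open>A shortest u,v-path: a u,v-walk with minimum number of vertices (hence of edges) among
  all u,v-walks; such a walk is automatically a path.\<close>
definition shortest_path :: "'a set \<Rightarrow> ('a \<Rightarrow> 'a \<Rightarrow> bool) \<Rightarrow> 'a \<Rightarrow> 'a \<Rightarrow> 'a list \<Rightarrow> bool" where
  "shortest_path V E u v P \<longleftrightarrow> walk V E P \<and> hd P = u \<and> last P = v \<and>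
     (\<forall>Q. walk V E Q \<and> hd Q = u \<and> last Q = v \<longrightarrow> length P \<le> length Q)"

definition edge_on :: "'a \<Rightarrow> 'a \<Rightarrow> 'a list \<Rightarrow> bool" where
  "edge_on x y P \<longleftrightarrow> (\<exists>i. Suc i < length P \<and> {P ! i, P ! Suc i} = {x, y})"

definition strong_edge_geodetic :: "'a set \<Rightarrow> ('a \<Rightarrow> 'a \<Rightarrow> bool) \<Rightarrow> 'a set \<Rightarrow> bool" where
  "strong_edge_geodetic V E S \<longleftrightarrow> S \<subseteq> V \<and>
     (\<exists>p :: 'a set \<Rightarrow> 'a list option.
        (\<forall>u\<in>S. \<forall>v\<in>S. u \<noteq> v \<longrightarrow>
            (\<forall>P. p {u, v} = Some P \<longrightarrow> shortest_path V E u v P \<or> shortest_path V E v u P)) \<and>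
        (\<forall>x\<in>V. \<forall>y\<in>V. E x y \<longrightarrow>
            (\<exists>u\<in>S. \<exists>v\<in>S. \<exists>P. u \<noteq> v \<and> p {u, v} = Some P \<and> edge_on x y P)))"

definition sg_e :: "'a set \<Rightarrow> ('a \<Rightarrow> 'a \<Rightarrow> bool) \<Rightarrow> nat" where
  "sg_e V E = Min {card S | S. strong_edge_geodetic V E S}"

definition path_adj :: "nat \<Rightarrow> nat \<Rightarrow> bool" where
  "path_adj i j \<longleftrightarrow> i + 1 = j \<or> j + 1 = i"

definition complete_adj :: "nat \<Rightarrow> nat \<Rightarrow> bool" where
  "complete_adj i j \<longleftrightarrow> i \<noteq> j"

definition cart_adj :: "('a \<Rightarrow> 'a \<Rightarrow> bool) \<Rightarrow> ('b \<Rightarrow> 'b \<Rightarrow> bool) \<Rightarrow> 'a \<times> 'b \<Rightarrow> 'a \<times> 'b \<Rightarrow> bool" where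
  "cart_adj EG EH x y \<longleftrightarrow>
     (fst x = fst y \<and> EH (snd x) (snd y)) \<or> (snd x = snd y \<and> EG (fst x) (fst y))"

definition sge_Pn_Km :: "nat \<Rightarrow> nat \<Rightarrow> nat" where
  "sge_Pn_Km n m = sg_e ({0..<n} \<times> {0..<m}) (cart_adj path_adj complete_adj)"

end

theory Submission
  imports Defs
begin

text \<open>
  Write the vertices of \<open>P\<^sub>n \<box> K\<^sub>m\<close> as pairs (level, column). A geodesic changes its column
  at most once, and then its two end vertices lie in the two columns involved. Hence, for
  columns \<open>j \<noteq> j'\<close>, each of the \<open>n\<close> edges between them is covered by the assigned geodesic
  of a distinct pair in \<open>S\<^sub>j \<times> S\<^sub>j'\<close>, so \<open>n \<le> |S\<^sub>j| |S\<^sub>j'|\<close>. If \<open>c \<le> r\<close> are the two smallest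
  column sizes, then \<open>|S| \<ge> c + (m - 1) r\<close> with \<open>cr \<ge> n\<close>, and the AM-GM inequality turns this
  into the stated bound.

  For the matching construction write level \<open>t = xK + y\<close> with \<open>y < K\<close>. Put the vertices
  \<open>x(K + 1)\<close> (capped at \<open>n - 1\<close>) for \<open>x \<le> M\<close> into every column but the first, and those
  with \<open>x < K\<close> into the first one. The level \<open>t\<close> lies between the positions of \<open>x\<close> and \<open>y\<close>,
  so a geodesic from position \<open>x\<close> in column \<open>j\<close> to position \<open>y\<close> in column \<open>j' < j\<close> can
  cross at level \<open>t\<close>. With \<open>(K, M) = (k, k - 1), (k, k), (k + 1, k)\<close> in the three cases this
  set has the required size.
\<close>

section \<open>Walks and strong edge geodetic sets\<close>

lemma walk_Cons_Cons_iff: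
  "walk V E (x # y # P) \<longleftrightarrow> x \<in> V \<and> E x y \<and> walk V E (y # P)"
  by (auto simp: walk_def nth_Cons split: nat.splits)

lemma walk_singleton_iff: "walk V E [x] \<longleftrightarrow> x \<in> V"
  by (simp add: walk_def)

lemma walk_append:
  "walk V E P \<Longrightarrow> walk V E Q \<Longrightarrow> E (last P) (hd Q) \<Longrightarrow> walk V E (P @ Q)"
proof (induction P rule: induct_list012)
  case (2 x)
  then show ?case by (cases Q) (auto simp: walk_Cons_Cons_iff walk_singleton_iff)
qed (auto simp: walk_Cons_Cons_iff)

lemma walk_take: "walk V E P \<Longrightarrow> 0 < k \<Longrightarrow> walk V E (take k P)"
  unfolding walk_def by (auto dest: in_set_takeD)

lemma walk_drop: "walk V E P \<Longrightarrow> k < length P \<Longrightarrow> walk V E (drop k P)"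
  unfolding walk_def by (auto dest: in_set_dropD)

lemma edge_on_commute: "edge_on x y P \<longleftrightarrow> edge_on y x P"
  unfolding edge_on_def by (simp add: insert_commute)

lemma edge_on_append_right: "edge_on x y Q \<Longrightarrow> edge_on x y (P @ Q)"
  unfolding edge_on_def
proof (elim exE conjE)
  fix i assume "Suc i < length Q" "{Q ! i, Q ! Suc i} = {x, y}"
  then show "\<exists>i. Suc i < length (P @ Q) \<and> {(P @ Q) ! i, (P @ Q) ! Suc i} = {x, y}"
    by (intro exI[of _ "length P + i"]) (simp add: nth_append)
qed

lemma edge_on_append_junction: "P \<noteq> [] \<Longrightarrow> Q \<noteq> [] \<Longrightarrow> edge_on (last P) (hd Q) (P @ Q)"
  unfolding edge_on_def
  by (intro exI[of _ "length P - 1"]) (auto simp: nth_append last_conv_nth hd_conv_nth)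

lemma sg_e_eqI:
  assumes "finite V"
    and lower: "\<And>S. strong_edge_geodetic V E S \<Longrightarrow> B \<le> card S"
    and "strong_edge_geodetic V E S\<^sub>0" and "card S\<^sub>0 \<le> B"
  shows "sg_e V E = B"
proof -
  let ?X = "{card S |S. strong_edge_geodetic V E S}"
  have "?X \<subseteq> {..card V}"
    using \<open>finite V\<close> by (auto simp: strong_edge_geodetic_def intro: card_mono)
  then have fin: "finite ?X" by (rule finite_subset) simp
  have mem: "card S\<^sub>0 \<in> ?X" using assms(3) by blast
  have "Min ?X \<le> card S\<^sub>0" using fin mem by (rule Min_le)
  moreover have "Min ?X \<in> ?X" using fin mem by (intro Min_in) auto
  then obtain S where "Min ?X = card S" "strong_edge_geodetic V E S" by blast
  ultimately show ?thesis using lower[of S] assms(4) unfolding sg_e_def by linarith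
qed

definition edge_geodetic_assignment ::
    "'a set \<Rightarrow> ('a \<Rightarrow> 'a \<Rightarrow> bool) \<Rightarrow> 'a set \<Rightarrow> ('a set \<Rightarrow> 'a list option) \<Rightarrow> bool" where
  "edge_geodetic_assignment V E S p \<longleftrightarrow>
     (\<forall>u\<in>S. \<forall>v\<in>S. u \<noteq> v \<longrightarrow>
        (\<forall>P. p {u, v} = Some P \<longrightarrow> shortest_path V E u v P \<or> shortest_path V E v u P)) \<and>
     (\<forall>x\<in>V. \<forall>y\<in>V. E x y \<longrightarrow> (\<exists>u\<in>S. \<exists>v\<in>S. \<exists>P. u \<noteq> v \<and> p {u, v} = Some P \<and> edge_on x y P))"

lemma strong_edge_geodetic_iff:
  "strong_edge_geodetic V E S \<longleftrightarrow> S \<subseteq> V \<and> (\<exists>p. edge_geodetic_assignment V E S p)"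
  unfolding strong_edge_geodetic_def edge_geodetic_assignment_def by (rule refl)

section \<open>Distances and geodesics in \<open>P\<^sub>n \<box> K\<^sub>m\<close>\<close>

abbreviation PK_adj :: "nat \<times> nat \<Rightarrow> nat \<times> nat \<Rightarrow> bool" where
  "PK_adj \<equiv> cart_adj path_adj complete_adj"

abbreviation PK_vertices :: "nat \<Rightarrow> nat \<Rightarrow> (nat \<times> nat) set" where
  "PK_vertices n m \<equiv> {0..<n} \<times> {0..<m}"

definition path_dist :: "nat \<Rightarrow> nat \<Rightarrow> nat" where
  "path_dist a b = (a - b) + (b - a)"

definition PK_dist :: "nat \<times> nat \<Rightarrow> nat \<times> nat \<Rightarrow> nat" where
  "PK_dist u v = path_dist (fst u) (fst v) + (if snd u = snd v then 0 else 1)"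

lemma PK_dist_triangle: "PK_dist u w \<le> PK_dist u v + PK_dist v w"
  by (auto simp: PK_dist_def path_dist_def)

lemma PK_dist_adj_le: "PK_adj x y \<Longrightarrow> PK_dist x z \<le> PK_dist y z + 1"
  by (auto simp: cart_adj_def path_adj_def complete_adj_def PK_dist_def path_dist_def)

lemma walk_length_ge_PK_dist: "walk V PK_adj P \<Longrightarrow> PK_dist (hd P) (last P) + 1 \<le> length P"
proof (induction P rule: induct_list012)
  case (2 x)
  then show ?case by (simp add: PK_dist_def path_dist_def)
next
  case (3 x y P)
  then have "PK_adj x y" and "PK_dist y (last (y # P)) + 1 \<le> length (y # P)"
    by (auto simp: walk_Cons_Cons_iff)
  then show ?case using PK_dist_adj_le[of x y "last (y # P)"] by simp
qed (simp add: walk_def)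

definition geodesic :: "(nat \<times> nat) set \<Rightarrow> (nat \<times> nat) list \<Rightarrow> bool" where
  "geodesic V P \<longleftrightarrow> walk V PK_adj P \<and> length P = PK_dist (hd P) (last P) + 1"

lemma shortest_pathI:
  "walk V PK_adj P \<Longrightarrow> hd P = u \<Longrightarrow> last P = v \<Longrightarrow> length P \<le> PK_dist u v + 1
   \<Longrightarrow> shortest_path V PK_adj u v P"
  unfolding shortest_path_def using walk_length_ge_PK_dist by fastforce

definition column_walk :: "nat \<Rightarrow> nat \<Rightarrow> nat \<Rightarrow> (nat \<times> nat) list" where
  "column_walk a b j = map (\<lambda>i. (if a \<le> b then a + i else a - i, j)) [0..<Suc (path_dist a b)]"

lemma length_column_walk [simp]: "length (column_walk a b j) = path_dist a b + 1"
  by (simp add: column_walk_def)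

lemma nth_column_walk:
  "i \<le> path_dist a b \<Longrightarrow> column_walk a b j ! i = (if a \<le> b then a + i else a - i, j)"
  unfolding column_walk_def by (simp del: upt_Suc add: nth_map)

lemma column_walk_not_Nil [simp]: "column_walk a b j \<noteq> []"
  by (simp add: column_walk_def)

lemma hd_column_walk [simp]: "hd (column_walk a b j) = (a, j)"
  by (simp add: hd_conv_nth nth_column_walk)

lemma last_column_walk [simp]: "last (column_walk a b j) = (b, j)"
  by (simp add: last_conv_nth nth_column_walk path_dist_def)

lemma walk_column_walk:
  assumes "a < n" "b < n" "j < m"
  shows "walk (PK_vertices n m) PK_adj (column_walk a b j)"
  unfolding walk_def
proof (intro conjI allI impI)
  show "set (column_walk a b j) \<subseteq> PK_vertices n m"
    using assms by (auto simp: column_walk_def path_dist_def)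
  fix i assume "Suc i < length (column_walk a b j)"
  then show "PK_adj (column_walk a b j ! i) (column_walk a b j ! Suc i)"
    by (auto simp: nth_column_walk cart_adj_def path_adj_def path_dist_def)
qed simp

lemma edge_on_column_walk:
  assumes "min a b \<le> i" "i < max a b"
  shows "edge_on (i, j) (Suc i, j) (column_walk a b j)"
proof (cases "a \<le> b")
  case True
  then have "Suc (i - a) < length (column_walk a b j)" "column_walk a b j ! (i - a) = (i, j)"
    "column_walk a b j ! Suc (i - a) = (Suc i, j)"
    using assms by (auto simp: nth_column_walk path_dist_def)
  then show ?thesis unfolding edge_on_def by metis
next
  case False
  then have "Suc (a - Suc i) < length (column_walk a b j)"
    "column_walk a b j ! (a - Suc i) = (Suc i, j)" "column_walk a b j ! Suc (a - Suc i) = (i, j)"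
    using assms by (auto simp: nth_column_walk path_dist_def Suc_diff_Suc)
  then show ?thesis unfolding edge_on_def by (metis insert_commute)
qed

lemma walk_column_walk_append:
  assumes "a < n" "t < n" "b < n" "j < m" "j' < m" "j \<noteq> j'"
  shows "walk (PK_vertices n m) PK_adj (column_walk a t j @ column_walk t b j')"
  using assms
  by (intro walk_append walk_column_walk) (auto simp: cart_adj_def complete_adj_def)

lemma shortest_path_column_walk:
  assumes "a < n" "b < n" "j < m"
  shows "shortest_path (PK_vertices n m) PK_adj (a, j) (b, j) (column_walk a b j)"
  using assms by (intro shortest_pathI walk_column_walk) (auto simp: PK_dist_def)

lemma shortest_path_geodesic:
  assumes "u \<in> PK_vertices n m" "v \<in> PK_vertices n m"
    and shortest: "shortest_path (PK_vertices n m) PK_adj u v P"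
  shows "geodesic (PK_vertices n m) P"
proof -
  obtain Q where Q: "walk (PK_vertices n m) PK_adj Q" "hd Q = u" "last Q = v"
    "length Q = PK_dist u v + 1"
  proof (cases "snd u = snd v")
    case True
    show ?thesis
      by (rule that[of "column_walk (fst u) (fst v) (snd u)"])
        (use assms(1,2) True in \<open>auto intro!: walk_column_walk simp: PK_dist_def prod_eq_iff\<close>)
  next
    case False
    show ?thesis
      by (rule that[of "column_walk (fst u) (fst v) (snd u) @ column_walk (fst v) (fst v) (snd v)"])
        (use assms(1,2) False in \<open>auto intro!: walk_column_walk_append
          simp: PK_dist_def path_dist_def prod_eq_iff\<close>)
  qed
  then have "length P \<le> PK_dist u v + 1" using shortest unfolding shortest_path_def by metis
  with shortest show ?thesis
    using walk_length_ge_PK_dist unfolding geodesic_def shortest_path_def by fastforce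
qed

lemma geodesic_column_change:
  assumes geo: "geodesic V P" and i: "Suc i < length P"
    and change: "snd (P ! i) \<noteq> snd (P ! Suc i)"
  shows "snd (hd P) = snd (P ! i)" "snd (last P) = snd (P ! Suc i)"
    and "geodesic V (drop (Suc i) P)"
proof -
  have w: "walk V PK_adj P" and len: "length P = PK_dist (hd P) (last P) + 1"
    using geo by (auto simp: geodesic_def)
  have adj: "PK_adj (P ! i) (P ! Suc i)" using w i by (simp add: walk_def)
  have w2: "walk V PK_adj (drop (Suc i) P)" using walk_drop[OF w i] .
  have hd2: "hd (drop (Suc i) P) = P ! Suc i" using i by (simp add: hd_drop_conv_nth)
  have "last (take (Suc i) P) = P ! i" using i by (simp add: take_Suc_conv_app_nth)
  then have before: "PK_dist (hd P) (P ! i) + 1 \<le> Suc i"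
    using walk_length_ge_PK_dist[OF walk_take[OF w, of "Suc i"]] i by simp
  moreover have "PK_dist (P ! Suc i) (last P) + 1 \<le> length P - Suc i"
    using walk_length_ge_PK_dist[OF w2] hd2 i by simp
  ultimately have short: "PK_dist (hd P) (P ! i) + PK_dist (P ! Suc i) (last P) + 1
      \<le> PK_dist (hd P) (last P)"
    using len i by linarith
  have "fst (P ! i) = fst (P ! Suc i)" using adj change by (auto simp: cart_adj_def)
  moreover have "path_dist (fst (hd P)) (fst (last P))
      \<le> path_dist (fst (hd P)) (fst (P ! i)) + path_dist (fst (P ! i)) (fst (last P))"
    by (auto simp: path_dist_def)
  ultimately show "snd (hd P) = snd (P ! i)" "snd (last P) = snd (P ! Suc i)"
    using short change unfolding PK_dist_def by (auto split: if_splits)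
  have "PK_dist (P ! i) (last P) \<le> PK_dist (P ! Suc i) (last P) + 1"
    using PK_dist_adj_le[OF adj] .
  then have "length (drop (Suc i) P) \<le> PK_dist (P ! Suc i) (last P) + 1"
    using len before PK_dist_triangle[of "hd P" "last P" "P ! i"] by simp
  then show "geodesic V (drop (Suc i) P)"
    using walk_length_ge_PK_dist[OF w2] hd2 w2 i unfolding geodesic_def by simp
qed

lemma geodesic_column_change_unique:
  assumes geo: "geodesic V P"
    and i: "Suc i < length P" "snd (P ! i) \<noteq> snd (P ! Suc i)"
    and i': "Suc i' < length P" "snd (P ! i') \<noteq> snd (P ! Suc i')"
  shows "i = i'"
proof -
  have no_second_change: False if "i < i'" "Suc i < length P" "snd (P ! i) \<noteq> snd (P ! Suc i)"
    "Suc i' < length P" "snd (P ! i') \<noteq> snd (P ! Suc i')" for i i'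
  proof -
    define l where "l = i' - Suc i"
    have l: "Suc l < length (drop (Suc i) P)" "drop (Suc i) P ! l = P ! i'"
      "drop (Suc i) P ! Suc l = P ! Suc i'"
      using that by (auto simp: l_def)
    have "snd (hd (drop (Suc i) P)) = snd (P ! i')"
      using geodesic_column_change(1)[OF geodesic_column_change(3)[OF geo that(2,3)] l(1)]
        l(2,3) that(5) by simp
    moreover have "hd (drop (Suc i) P) = P ! Suc i" using that(2) by (simp add: hd_drop_conv_nth)
    moreover have "snd (P ! i) = snd (P ! i')"
      using geodesic_column_change(1)[OF geo that(2,3)] geodesic_column_change(1)[OF geo that(4,5)]
      by simp
    ultimately show False using that(3) by simp
  qed
  show ?thesis
  proof (rule linorder_cases[of i i'])
    assume "i < i'"
    then show ?thesis using no_second_change[OF _ i i'] by blast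
  next
    assume "i' < i"
    then show ?thesis using no_second_change[OF _ i' i] by blast
  qed
qed

lemma geodesic_crossing_endpoints:
  assumes "geodesic V P" "edge_on (t, j) (t, j') P" "j \<noteq> j'"
  obtains a b where "{hd P, last P} = {(a, j), (b, j')}"
proof -
  obtain i where i: "Suc i < length P" "{P ! i, P ! Suc i} = {(t, j), (t, j')}"
    using assms(2) unfolding edge_on_def by blast
  then have "snd (P ! i) \<noteq> snd (P ! Suc i)" using assms(3) by (auto simp: doubleton_eq_iff)
  note cols = geodesic_column_change(1,2)[OF assms(1) i(1) this]
  have "hd P = (fst (hd P), snd (P ! i))" "last P = (fst (last P), snd (P ! Suc i))"
    using cols by (metis prod.collapse)+
  then show ?thesis
    using i(2) assms(3) that[of "fst (hd P)" "fst (last P)"] that[of "fst (last P)" "fst (hd P)"]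
    by (auto simp: doubleton_eq_iff insert_commute)
qed

lemma geodesic_crossing_unique:
  assumes "geodesic V P" "j \<noteq> j'"
    and "edge_on (t, j) (t, j') P" "edge_on (t', j) (t', j') P"
  shows "t = t'"
proof -
  obtain i where i: "Suc i < length P" "{P ! i, P ! Suc i} = {(t, j), (t, j')}"
    using assms(3) unfolding edge_on_def by blast
  obtain i' where i': "Suc i' < length P" "{P ! i', P ! Suc i'} = {(t', j), (t', j')}"
    using assms(4) unfolding edge_on_def by blast
  have "i = i'"
    using geodesic_column_change_unique[OF assms(1) i(1) _ i'(1)] i(2) i'(2) assms(2)
    by (auto simp: doubleton_eq_iff)
  then show ?thesis using i(2) i'(2) assms(2) by (auto simp: doubleton_eq_iff)
qed

section \<open>The lower bound\<close>

definition column :: "(nat \<times> nat) set \<Rightarrow> nat \<Rightarrow> nat set" where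
  "column S j = {i. (i, j) \<in> S}"

lemma finite_column: "S \<subseteq> PK_vertices n m \<Longrightarrow> finite (column S j)"
  by (rule finite_subset[of _ "{..<n}"]) (auto simp: column_def)

lemma card_eq_sum_columns:
  assumes "S \<subseteq> PK_vertices n m"
  shows "card S = (\<Sum>j<m. card (column S j))"
proof -
  have "S = (\<lambda>(j, i). (i, j)) ` (SIGMA j:{..<m}. column S j)"
    using assms by (auto simp: column_def image_iff)
  moreover have "inj_on (\<lambda>(j, i). (i, j)) (SIGMA j:{..<m}. column S j)"
    by (auto simp: inj_on_def)
  ultimately have "card S = card (SIGMA j:{..<m}. column S j)" by (metis card_image)
  with finite_column[OF assms] show ?thesis by simp
qed

lemma crossing_assigned_pair:
  assumes p: "edge_geodetic_assignment (PK_vertices n m) PK_adj S p"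
    and S: "S \<subseteq> PK_vertices n m" and "t < n" "j < m" "j' < m" "j \<noteq> j'"
  obtains a b P where "a \<in> column S j" "b \<in> column S j'" "p {(a, j), (b, j')} = Some P"
    "geodesic (PK_vertices n m) P" "edge_on (t, j) (t, j') P"
proof -
  have "(t, j) \<in> PK_vertices n m" "(t, j') \<in> PK_vertices n m" "PK_adj (t, j) (t, j')"
    using assms(3-6) by (auto simp: cart_adj_def complete_adj_def)
  then obtain u v P where uv: "u \<in> S" "v \<in> S" "u \<noteq> v" "p {u, v} = Some P"
    and on: "edge_on (t, j) (t, j') P"
    using p unfolding edge_geodetic_assignment_def by blast
  then have "shortest_path (PK_vertices n m) PK_adj u v P \<or>
      shortest_path (PK_vertices n m) PK_adj v u P"
    using p unfolding edge_geodetic_assignment_def by blast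
  then have geo: "geodesic (PK_vertices n m) P" and ends: "{hd P, last P} = {u, v}"
    using shortest_path_geodesic uv(1,2) S by (auto simp: shortest_path_def)
  obtain a b where "{hd P, last P} = {(a, j), (b, j')}"
    using geodesic_crossing_endpoints[OF geo on assms(6)] .
  then show ?thesis
    using that[of a b P] ends uv geo on unfolding column_def
    by (auto simp: doubleton_eq_iff insert_commute)
qed

lemma card_mult_card_columns_ge:
  assumes sg: "strong_edge_geodetic (PK_vertices n m) PK_adj S"
    and j: "j < m" "j' < m" "j \<noteq> j'"
  shows "n \<le> card (column S j) * card (column S j')"
proof -
  obtain p where p: "edge_geodetic_assignment (PK_vertices n m) PK_adj S p"
    and S: "S \<subseteq> PK_vertices n m"
    using sg unfolding strong_edge_geodetic_iff by blast
  define crosses where "crosses t ab \<longleftrightarrow> (\<exists>P. p {(fst ab, j), (snd ab, j')} = Some P \<and>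
      geodesic (PK_vertices n m) P \<and> edge_on (t, j) (t, j') P)" for t ab
  have "\<exists>ab \<in> column S j \<times> column S j'. crosses t ab" if "t < n" for t
    by (rule crossing_assigned_pair[OF p S that j]) (force simp: crosses_def)
  then obtain f where f: "\<And>t. t \<in> {..<n} \<Longrightarrow> f t \<in> column S j \<times> column S j' \<and> crosses t (f t)"
    by (metis lessThan_iff)
  have "inj_on f {..<n}"
    using f geodesic_crossing_unique[OF _ j(3)] unfolding crosses_def
    by (intro inj_onI) (metis option.inject)
  moreover have "f ` {..<n} \<subseteq> column S j \<times> column S j'" using f by blast
  ultimately have "card {..<n} \<le> card (column S j \<times> column S j')"
    using finite_column[OF S] by (intro card_inj_on_le) auto
  then show ?thesis by (simp add: card_cartesian_product)
qed

lemma sum_ge_two_smallest: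
  fixes f :: "nat \<Rightarrow> nat"
  assumes "2 \<le> m"
  obtains j\<^sub>0 j\<^sub>1 where "j\<^sub>0 < m" "j\<^sub>1 < m" "j\<^sub>0 \<noteq> j\<^sub>1" "f j\<^sub>0 \<le> f j\<^sub>1"
    "f j\<^sub>0 + (m - 1) * f j\<^sub>1 \<le> (\<Sum>j<m. f j)"
proof -
  have "Min (f ` {..<m}) \<in> f ` {..<m}" using assms by (intro Min_in) (auto simp: lessThan_empty_iff)
  then obtain j\<^sub>0 where j\<^sub>0: "j\<^sub>0 < m" "f j\<^sub>0 = Min (f ` {..<m})" by auto
  define A where "A = {..<m} - {j\<^sub>0}"
  have A: "finite A" "card A = m - 1" using j\<^sub>0(1) by (simp_all add: A_def)
  then have "Min (f ` A) \<in> f ` A" using assms by (intro Min_in) auto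
  then obtain j\<^sub>1 where j\<^sub>1: "j\<^sub>1 \<in> A" "f j\<^sub>1 = Min (f ` A)" by auto
  have "(\<Sum>j<m. f j) = f j\<^sub>0 + sum f A"
    using j\<^sub>0(1) unfolding A_def by (simp add: sum.remove)
  moreover have "card A * f j\<^sub>1 \<le> sum f A"
    using sum_bounded_below[of A "f j\<^sub>1" f] j\<^sub>1 A(1) by simp
  moreover have "f j\<^sub>0 \<le> f j\<^sub>1" unfolding j\<^sub>0(2) using j\<^sub>1(1) by (intro Min_le) (auto simp: A_def)
  ultimately show ?thesis
    using that[of j\<^sub>0 j\<^sub>1] j\<^sub>0(1) j\<^sub>1(1) A(2) by (auto simp: A_def mult.commute)
qed

definition sge_bound :: "nat \<Rightarrow> nat \<Rightarrow> nat \<Rightarrow> nat" where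
  "sge_bound m k h = (if h = 0 then m * k else if h \<le> k then m * k + (m - 1) else m * k + m)"

lemma four_mult_le_sum_square: "4 * (c * r) \<le> (c + r)\<^sup>2" for c r :: nat
proof -
  have "0 \<le> (int c - int r)\<^sup>2" by simp
  then have "int (4 * (c * r)) \<le> int ((c + r)\<^sup>2)" by (simp add: power2_eq_square algebra_simps)
  then show ?thesis by linarith
qed

lemma sge_bound_le:
  fixes m n k c r :: nat
  assumes m: "2 \<le> m" and n: "k\<^sup>2 \<le> n" "n < (k + 1)\<^sup>2"
    and cr: "c \<le> r" "n \<le> c * r"
  shows "sge_bound m k (n - k\<^sup>2) \<le> c + (m - 1) * r"
proof -
  have sum: "4 * n \<le> (c + r)\<^sup>2" using four_mult_le_sum_square[of c r] cr(2) by linarith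
  have "n \<le> r\<^sup>2" unfolding power2_eq_square using cr(2) mult_le_mono1[OF cr(1), of r] by linarith
  then have r: "k \<le> r" "k\<^sup>2 < n \<Longrightarrow> k + 1 \<le> r"
    using power2_le_imp_le[of k r] power2_less_imp_less[of k r] n(1) by linarith+
  obtain m' where m': "m = m' + 2" using m by (metis add.commute le_Suc_ex)
  have expand: "c + (m - 1) * r = (c + r) + m' * r" using m' by (simp add: algebra_simps)
  consider "n = k\<^sup>2" | "k\<^sup>2 < n" "n - k\<^sup>2 \<le> k" | "k\<^sup>2 + k < n"
    using n(1) by linarith
  then show ?thesis
  proof cases
    case 1
    then have "(2 * k)\<^sup>2 \<le> (c + r)\<^sup>2" using sum by (simp add: power_mult_distrib)
    then have "2 * k \<le> c + r" by (rule power2_le_imp_le) simp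
    moreover have "m' * k \<le> m' * r" using r(1) by (rule mult_le_mono2)
    moreover have "sge_bound m k (n - k\<^sup>2) = 2 * k + m' * k"
      using 1 m' by (simp add: sge_bound_def algebra_simps)
    ultimately show ?thesis using expand by linarith
  next
    case 2
    then have "(2 * k)\<^sup>2 < (c + r)\<^sup>2" using sum by (simp add: power_mult_distrib)
    then have "2 * k + 1 \<le> c + r" using power2_less_imp_less[of "2 * k" "c + r"] by simp
    moreover have "m' * (k + 1) \<le> m' * r" using r(2)[OF 2(1)] by (rule mult_le_mono2)
    moreover have "sge_bound m k (n - k\<^sup>2) = (2 * k + 1) + m' * (k + 1)"
      using 2 m' by (simp add: sge_bound_def algebra_simps)
    ultimately show ?thesis using expand by linarith
  next
    case 3
    then have "(2 * k + 1)\<^sup>2 < (c + r)\<^sup>2" using sum by (simp add: power2_eq_square algebra_simps)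
    then have "2 * k + 2 \<le> c + r" using power2_less_imp_less[of "2 * k + 1" "c + r"] by simp
    moreover have "m' * (k + 1) \<le> m' * r" using r(2) 3 by (intro mult_le_mono2) linarith
    moreover have "sge_bound m k (n - k\<^sup>2) = (2 * k + 2) + m' * (k + 1)"
      using 3 m' by (simp add: sge_bound_def algebra_simps)
    ultimately show ?thesis using expand by linarith
  qed
qed

lemma sge_bound_le_card:
  assumes sg: "strong_edge_geodetic (PK_vertices n m) PK_adj S"
    and "2 \<le> m" "k\<^sup>2 \<le> n" "n < (k + 1)\<^sup>2"
  shows "sge_bound m k (n - k\<^sup>2) \<le> card S"
proof -
  obtain j\<^sub>0 j\<^sub>1 where j: "j\<^sub>0 < m" "j\<^sub>1 < m" "j\<^sub>0 \<noteq> j\<^sub>1"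
    and le: "card (column S j\<^sub>0) \<le> card (column S j\<^sub>1)"
    and sum: "card (column S j\<^sub>0) + (m - 1) * card (column S j\<^sub>1) \<le> (\<Sum>j<m. card (column S j))"
    using sum_ge_two_smallest[OF \<open>2 \<le> m\<close>, of "\<lambda>j. card (column S j)"] by blast
  have "sge_bound m k (n - k\<^sup>2) \<le> card (column S j\<^sub>0) + (m - 1) * card (column S j\<^sub>1)"
    by (rule sge_bound_le[OF assms(2-4) le card_mult_card_columns_ge[OF sg j]])
  also have "\<dots> \<le> (\<Sum>j<m. card (column S j))" by (rule sum)
  also have "\<dots> = card S"
    using sg card_eq_sum_columns unfolding strong_edge_geodetic_def by metis
  finally show ?thesis .
qed

section \<open>The construction\<close>

locale PK_construction =
  fixes n m K M :: nat
  assumes K_pos: "1 \<le> K" and K_le: "K \<le> M + 1" and n_le: "n \<le> K * (M + 1)"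
    and positions_distinct: "M = 0 \<or> (M - 1) * (K + 1) + 1 < n"
    and n_ge: "2 \<le> n" and m_ge: "2 \<le> m"
begin

definition pos :: "nat \<Rightarrow> nat" where
  "pos x = min (x * (K + 1)) (n - 1)"

lemma pos_less: "pos x < n"
  using n_ge by (simp add: pos_def)

lemma pos_mono: "x \<le> y \<Longrightarrow> pos x \<le> pos y"
  unfolding pos_def by (intro min.mono mult_le_mono1) simp_all

lemma pos_0 [simp]: "pos 0 = 0"
  by (simp add: pos_def)

lemma M_pos: "1 \<le> M"
  using K_pos K_le n_le n_ge by (cases M) auto

lemma pos_M: "pos M = n - 1"
proof -
  have "n \<le> K * M + M + 1" using n_le K_le by (simp add: algebra_simps)
  then show ?thesis by (simp add: pos_def algebra_simps)
qed

lemma pos_less_M: "x < M \<Longrightarrow> pos x = x * (K + 1) \<and> x * (K + 1) < n - 1"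
proof -
  assume "x < M"
  then have "x * (K + 1) \<le> (M - 1) * (K + 1)" by (intro mult_le_mono1) simp
  then show ?thesis using positions_distinct M_pos by (simp add: pos_def)
qed

lemma pos_inj:
  assumes "x \<le> M" "y \<le> M" "pos x = pos y"
  shows "x = y"
proof (cases "x < M \<and> y < M")
  case True
  then have "x * (K + 1) = y * (K + 1)" using pos_less_M assms(3) by metis
  then show ?thesis by (simp only: mult_cancel2) simp
next
  case False
  then show ?thesis
    using assms pos_less_M[of x] pos_less_M[of y] pos_M by (cases "x < M"; cases "y < M") auto
qed

lemma div_le_M: "t < n \<Longrightarrow> t div K \<le> M"
  using n_le less_mult_imp_div_less[of t "M + 1" K] by (simp add: mult.commute)

lemma mod_le_M: "t mod K \<le> M"
  using K_pos K_le mod_less_divisor[of K t] by linarith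

lemma level_between_positions:
  assumes "t < n"
  shows "path_dist (pos (t div K)) t + path_dist t (pos (t mod K))
       = path_dist (pos (t div K)) (pos (t mod K))"
proof -
  define x y where "x = t div K" and "y = t mod K"
  have t: "t = x * K + y" and "y < K" using K_pos by (simp_all add: x_def y_def)
  have "pos x \<le> x * (K + 1)" "pos y \<le> y * (K + 1)" by (simp_all add: pos_def)
  moreover have "x \<le> y \<Longrightarrow> t \<le> y * (K + 1)" "y \<le> x \<Longrightarrow> t \<le> x * (K + 1)"
    using t mult_le_mono1[of x y K] mult_le_mono1[of y x K] by (simp_all add: algebra_simps)
  moreover have "x \<le> y \<Longrightarrow> x * (K + 1) \<le> t" "y \<le> x \<Longrightarrow> y * (K + 1) \<le> t"
    using t mult_le_mono1[of x y K] mult_le_mono1[of y x K] by (simp_all add: algebra_simps)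
  ultimately have "(pos x \<le> t \<and> t \<le> pos y) \<or> (pos y \<le> t \<and> t \<le> pos x)"
    using assms by (cases "x \<le> y") (auto simp: pos_def)
  then show ?thesis by (auto simp: path_dist_def x_def y_def)
qed

definition S\<^sub>0 :: "(nat \<times> nat) set" where
  "S\<^sub>0 = (\<lambda>x. (pos x, 0)) ` {..<K} \<union> (\<lambda>(x, j). (pos x, j)) ` ({..M} \<times> {1..<m})"

lemma card_S\<^sub>0: "card S\<^sub>0 \<le> K + (m - 1) * (M + 1)"
proof -
  have "card S\<^sub>0 \<le> card {..<K} + card ({..M} \<times> {1..<m})"
    unfolding S\<^sub>0_def by (intro card_Un_le[THEN order_trans] add_mono card_image_le) auto
  then show ?thesis by (simp add: card_cartesian_product algebra_simps)
qed

lemma S\<^sub>0_subset: "S\<^sub>0 \<subseteq> PK_vertices n m"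
  unfolding S\<^sub>0_def using pos_less m_ge by auto

lemma in_S\<^sub>0_first: "x < K \<Longrightarrow> (pos x, 0) \<in> S\<^sub>0"
  unfolding S\<^sub>0_def by auto

lemma in_S\<^sub>0_other: "x \<le> M \<Longrightarrow> 1 \<le> j \<Longrightarrow> j < m \<Longrightarrow> (pos x, j) \<in> S\<^sub>0"
  unfolding S\<^sub>0_def by (intro UnI2 image_eqI[of _ _ "(x, j)"]) auto

definition crossing_walk :: "nat \<Rightarrow> nat \<Rightarrow> nat \<Rightarrow> (nat \<times> nat) list" where
  "crossing_walk t j j' = column_walk (pos (t div K)) t j @ column_walk t (pos (t mod K)) j'"

lemma shortest_path_crossing_walk:
  assumes "t < n" "j < m" "j' < m" "j \<noteq> j'"
  shows "shortest_path (PK_vertices n m) PK_adj (pos (t div K), j) (pos (t mod K), j')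
           (crossing_walk t j j')"
  unfolding crossing_walk_def
  using assms pos_less level_between_positions[OF assms(1)]
  by (intro shortest_pathI walk_column_walk_append) (auto simp: PK_dist_def)

definition assigned :: "(nat \<times> nat) set \<Rightarrow> (nat \<times> nat) list \<Rightarrow> bool" where
  "assigned A P \<longleftrightarrow>
     (\<exists>t j j'. t < n \<and> j' < j \<and> j < m \<and>
        A = {(pos (t div K), j), (pos (t mod K), j')} \<and> P = crossing_walk t j j') \<or>
     (\<exists>a b j. a < b \<and> (a, j) \<in> S\<^sub>0 \<and> (b, j) \<in> S\<^sub>0 \<and> A = {(a, j), (b, j)} \<and> P = column_walk a b j)"

lemma assigned_unique: "assigned A P \<Longrightarrow> assigned A P' \<Longrightarrow> P = P'"
proof -
  have crossing: "t = s"
    if "t < n" "s < n" "pos (t div K) = pos (s div K)" "pos (t mod K) = pos (s mod K)" for t s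
    using that pos_inj div_le_M mod_le_M by (metis div_mult_mod_eq)
  show "assigned A P \<Longrightarrow> assigned A P' \<Longrightarrow> P = P'"
    unfolding assigned_def
    by (elim disjE exE conjE) (auto simp: doubleton_eq_iff dest: crossing)
qed

lemma assigned_shortest_path:
  assumes "assigned {u, v} P"
  shows "shortest_path (PK_vertices n m) PK_adj u v P \<or> shortest_path (PK_vertices n m) PK_adj v u P"
  using assms S\<^sub>0_subset shortest_path_crossing_walk shortest_path_column_walk
  unfolding assigned_def by (auto simp: doubleton_eq_iff)

definition assignment :: "(nat \<times> nat) set \<Rightarrow> (nat \<times> nat) list option" where
  "assignment A = (if \<exists>P. assigned A P then Some (SOME P. assigned A P) else None)"

lemma assignment_eq_Some_iff: "assignment A = Some P \<longleftrightarrow> assigned A P"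
  unfolding assignment_def using assigned_unique by (auto intro: someI_ex someI2)

definition covered :: "nat \<times> nat \<Rightarrow> nat \<times> nat \<Rightarrow> bool" where
  "covered x y \<longleftrightarrow> (\<exists>u\<in>S\<^sub>0. \<exists>v\<in>S\<^sub>0. \<exists>P. u \<noteq> v \<and> assigned {u, v} P \<and> edge_on x y P)"

lemma covered_commute: "covered x y \<longleftrightarrow> covered y x"
  unfolding covered_def by (simp add: edge_on_commute)

lemma covered_by_column_walk:
  assumes "a < b" "(a, j) \<in> S\<^sub>0" "(b, j) \<in> S\<^sub>0" "edge_on x y (column_walk a b j)"
  shows "covered x y"
proof -
  have "assigned {(a, j), (b, j)} (column_walk a b j)"
    unfolding assigned_def using assms(1-3) by (intro disjI2 exI[of _ a] exI[of _ b] exI[of _ j]) simp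
  then show ?thesis
    unfolding covered_def using assms
    by (intro bexI[of _ "(a, j)"] bexI[of _ "(b, j)"] exI[of _ "column_walk a b j"]) auto
qed

lemma covered_by_crossing_walk:
  assumes "t < n" "j' < j" "j < m" "edge_on x y (crossing_walk t j j')"
  shows "covered x y"
proof -
  have "(pos (t div K), j) \<in> S\<^sub>0" using in_S\<^sub>0_other div_le_M assms(1-3) by simp
  moreover have "(pos (t mod K), j') \<in> S\<^sub>0"
    using in_S\<^sub>0_first[of "t mod K"] in_S\<^sub>0_other[OF mod_le_M, of j'] K_pos assms(2,3)
    by (cases "j' = 0") auto
  moreover have "assigned {(pos (t div K), j), (pos (t mod K), j')} (crossing_walk t j j')"
    unfolding assigned_def using assms(1-3)
    by (intro disjI1 exI[of _ t] exI[of _ j] exI[of _ j']) simp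
  ultimately show ?thesis
    unfolding covered_def using assms(2,4)
    by (intro bexI[of _ "(pos (t div K), j)"] bexI[of _ "(pos (t mod K), j')"]
        exI[of _ "crossing_walk t j j'"]) auto
qed

lemma column_edge_covered:
  assumes l: "Suc l < n" and c: "c < m"
  shows "covered (l, c) (Suc l, c)"
proof (cases "c = 0")
  case False
  have "(0, c) \<in> S\<^sub>0" using in_S\<^sub>0_other[of 0 c] False c by simp
  moreover have "(n - 1, c) \<in> S\<^sub>0" using in_S\<^sub>0_other[of M c] False c pos_M by simp
  moreover have "edge_on (l, c) (Suc l, c) (column_walk 0 (n - 1) c)"
    using l by (intro edge_on_column_walk) auto
  ultimately show ?thesis using l by (intro covered_by_column_walk) auto
next
  case True
  show ?thesis
  proof (cases "Suc l \<le> pos (K - 1)")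
    case below: True
    have "(0, c) \<in> S\<^sub>0" "(pos (K - 1), c) \<in> S\<^sub>0"
      using in_S\<^sub>0_first[of 0] in_S\<^sub>0_first[of "K - 1"] K_pos True by auto
    moreover have "edge_on (l, c) (Suc l, c) (column_walk 0 (pos (K - 1)) c)"
      using below by (intro edge_on_column_walk) auto
    ultimately show ?thesis using below by (intro covered_by_column_walk) auto
  next
    case above: False
    text \<open>Covered by the second half of the crossing walk at the top level \<open>n - 1\<close>.\<close>
    have "pos ((n - 1) mod K) \<le> pos (K - 1)"
      using K_pos mod_less_divisor[of K "n - 1"] by (intro pos_mono) linarith
    then have "edge_on (l, c) (Suc l, c) (crossing_walk (n - 1) 1 c)"
      unfolding crossing_walk_def using above l
      by (intro edge_on_append_right edge_on_column_walk) auto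
    then show ?thesis using n_ge m_ge True by (intro covered_by_crossing_walk) auto
  qed
qed

lemma level_edge_covered:
  assumes "i < n" "c < m" "c' < m" "c \<noteq> c'"
  shows "covered (i, c) (i, c')"
proof -
  define j j' where "j = max c c'" and "j' = min c c'"
  have "edge_on (i, j) (i, j') (crossing_walk i j j')"
    using edge_on_append_junction[of "column_walk (pos (i div K)) i j"
        "column_walk i (pos (i mod K)) j'"]
    by (simp add: crossing_walk_def)
  then have "edge_on (i, c) (i, c') (crossing_walk i j j')"
    using assms(4) by (cases "c < c'") (auto simp: j_def j'_def edge_on_commute)
  then show ?thesis
    using assms by (intro covered_by_crossing_walk) (auto simp: j_def j'_def)
qed

lemma edge_geodetic_assignment_S\<^sub>0:
  "edge_geodetic_assignment (PK_vertices n m) PK_adj S\<^sub>0 assignment"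
  unfolding edge_geodetic_assignment_def
proof (intro conjI ballI impI allI)
  fix u v P assume "assignment {u, v} = Some P"
  then show "shortest_path (PK_vertices n m) PK_adj u v P \<or>
      shortest_path (PK_vertices n m) PK_adj v u P"
    by (simp add: assignment_eq_Some_iff assigned_shortest_path)
next
  fix x y assume xy: "x \<in> PK_vertices n m" "y \<in> PK_vertices n m" "PK_adj x y"
  obtain i c i' c' where x: "x = (i, c)" and y: "y = (i', c')" by (cases x, cases y)
  have "covered (i, c) (i', c')"
    using xy level_edge_covered[of i c c'] column_edge_covered[of i c] column_edge_covered[of i' c]
    unfolding x y by (auto simp: cart_adj_def path_adj_def complete_adj_def covered_commute)
  then have "covered x y" using x y by simp
  then show "\<exists>u\<in>S\<^sub>0. \<exists>v\<in>S\<^sub>0. \<exists>P. u \<noteq> v \<and> assignment {u, v} = Some P \<and> edge_on x y P"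
    by (simp add: covered_def assignment_eq_Some_iff)
qed


lemma strong_edge_geodetic_S\<^sub>0: "strong_edge_geodetic (PK_vertices n m) PK_adj S\<^sub>0"
  using S\<^sub>0_subset edge_geodetic_assignment_S\<^sub>0 unfolding strong_edge_geodetic_iff by blast

end

lemma PK_construction_parameters:
  fixes m n k :: nat
  assumes "2 \<le> m" "2 \<le> n" "1 \<le> k" "k\<^sup>2 \<le> n" "n < (k + 1)\<^sup>2"
  obtains K M where "PK_construction n m K M" "K + (m - 1) * (M + 1) = sge_bound m k (n - k\<^sup>2)"
proof -
  obtain k' where k': "k = k' + 1" using assms(3) by (metis add.commute le_Suc_ex)
  obtain m' where m': "m = m' + 1" using assms(1) by (metis add.commute le_add_diff_inverse2 le_trans one_le_numeral)
  note intro = that[unfolded PK_construction_def sge_bound_def]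
  consider "n = k\<^sup>2" | "k\<^sup>2 < n" "n \<le> k\<^sup>2 + k" | "k\<^sup>2 + k < n"
    using assms(4) by linarith
  then show ?thesis
  proof cases
    case 1
    have "k' = 0 \<or> (k' - 1) * (k + 1) + 1 < n"
      using 1 k' by (cases k') (auto simp: power2_eq_square algebra_simps)
    then show ?thesis
      using intro[of k k'] 1 k' m' assms(1,2) by (simp add: power2_eq_square algebra_simps)
  next
    case 2
    then show ?thesis
      using intro[of k k] k' m' assms(1,2) by (simp add: power2_eq_square algebra_simps)
  next
    case 3
    then show ?thesis
      using intro[of "k + 1" k] k' m' assms(1,2,5) by (simp add: power2_eq_square algebra_simps)
  qed
qed

lemma sge_Pn_Km_eq_sge_bound:
  assumes "2 \<le> m" "2 \<le> n" "1 \<le> k" "k\<^sup>2 \<le> n" "n < (k + 1)\<^sup>2"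
  shows "sge_Pn_Km n m = sge_bound m k (n - k\<^sup>2)"
proof -
  obtain K M where "PK_construction n m K M"
    and size: "K + (m - 1) * (M + 1) = sge_bound m k (n - k\<^sup>2)"
    using PK_construction_parameters[OF assms] .
  then interpret PK_construction n m K M by simp
  show ?thesis
    unfolding sge_Pn_Km_def
  proof (rule sg_e_eqI[OF _ _ strong_edge_geodetic_S\<^sub>0])
    show "card S\<^sub>0 \<le> sge_bound m k (n - k\<^sup>2)" using card_S\<^sub>0 size by simp
  qed (use assms(1,4,5) sge_bound_le_card in auto)
qed

theorem mainTheorem12:
  fixes m n k h :: nat
  assumes "m \<ge> 3" and "n \<ge> 2" and "k \<ge> 1"
    and "k^2 \<le> n" and "n < (k+1)^2" and "h = n - k^2"
  shows "sge_Pn_Km n m =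
           (if h = 0 then m * k
            else if h \<le> k then m * k + (m - 1)
            else m * k + m)
         \<and> sge_Pn_Km 2 m = 2 * m - 1"
proof
  have m: "2 \<le> m" using assms(1) by simp
  show "sge_Pn_Km n m = (if h = 0 then m * k else if h \<le> k then m * k + (m - 1) else m * k + m)"
    using sge_Pn_Km_eq_sge_bound[OF m assms(2-5)] assms(6) by (simp add: sge_bound_def)
  show "sge_Pn_Km 2 m = 2 * m - 1"
    using sge_Pn_Km_eq_sge_bound[OF m, of 2 1] m by (simp add: sge_bound_def power2_eq_square)
qed

end
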